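(* Let $P$ be a poset (regarded as a category) with a partial model structure $(\mathcal{W},\mathcal{U},\mathcal{V})$, and let $Q$ be a connected component of $\mathcal{W}$ that contains a maximal map $f\colon a\to b$ (i.e. there are no non-identity morphisms $z\to a$ or $b\to z$ in $Q$). Then $Q$ contains an object $c$ such that for every $x\in Q$ the product $c\times x$ and the coproduct $c\cup x$ exist in $P$ and lie in $Q$. Consequently $Q$ is contractible.
   Context: A homotopical category $(\mathcal{C},\mathcal{W})$ is a category $\mathcal{C}$ with a subcategory $\mathcal{W}$ containing all objects and satisfying 2-out-of-6: if $h\circ g$ and $g\circ f$ are in $\mathcal{W}$ then so are $f,g,h,h\circ g\circ f$. A partial model category is a homotopical category $(\mathcal{C},\mathcal{W})$ together with subcategories $\mathcal{U},\mathcal{V}\subseteq\mathcal{W}$ such that (i) pushouts of morphisms of $\mathcal{U}$ along arbitrary morphisms of $\mathcal{C}$ exist and lie in $\mathcal{U}$, and pullbacks of morphisms of $\mathcal{V}$ along arbitrary morphisms exist and lie in $\mathcal{V}$; (ii) the morphisms of $\mathcal{W}$ admit a functorial factorization as a morphism of $\mathcal{U}$ followed by a morphism of $\mathcal{V}$. A connected component is a maximal connected full subcategory (objects joined by zigzags). In a poset, $c\times x$ and $c\cup x$ are the greatest lower and least upper bounds. Contractible means the classifying space of the nerve is contractible. *)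

theory Defs
  imports "HOL-Analysis.Analysis"
begin

text \<open>The poset P is the type 'a with its order; morphisms of P are pairs (x,y) with x \<le> y.
  Subcategories of P are represented by their sets of morphisms.\<close>

definition subcat :: "('a::order \<times> 'a) set \<Rightarrow> bool" where
  "subcat S \<longleftrightarrow> (\<forall>(x,y)\<in>S. x \<le> y \<and> (x,x) \<in> S \<and> (y,y) \<in> S)
     \<and> (\<forall>x y z. (x,y) \<in> S \<longrightarrow> (y,z) \<in> S \<longrightarrow> (x,z) \<in> S)"

(* composable f : x -> y, g : y -> z, h : z -> w in P; g o f = (x,z), h o g = (y,w) *)
definition homotopical :: "('a::order \<times> 'a) set \<Rightarrow> bool" where
  "homotopical W \<longleftrightarrow> subcat W \<and> (\<forall>x. (x,x) \<in> W) \<and>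
     (\<forall>x y z w. x \<le> y \<longrightarrow> y \<le> z \<longrightarrow> z \<le> w \<longrightarrow> (x,z) \<in> W \<longrightarrow> (y,w) \<in> W \<longrightarrow>
        (x,y) \<in> W \<and> (y,z) \<in> W \<and> (z,w) \<in> W \<and> (x,w) \<in> W)"

definition is_lub :: "'a::order \<Rightarrow> 'a \<Rightarrow> 'a \<Rightarrow> bool" where
  "is_lub y z s \<longleftrightarrow> y \<le> s \<and> z \<le> s \<and> (\<forall>t. y \<le> t \<longrightarrow> z \<le> t \<longrightarrow> s \<le> t)"

definition is_glb :: "'a::order \<Rightarrow> 'a \<Rightarrow> 'a \<Rightarrow> bool" where
  "is_glb y z p \<longleftrightarrow> p \<le> y \<and> p \<le> z \<and> (\<forall>t. t \<le> y \<longrightarrow> t \<le> z \<longrightarrow> t \<le> p)"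

text \<open>In a poset the pushout of u : x \<rightarrow> y along g : x \<rightarrow> z is the join y \<union> z, with
  the pushed-out map z \<rightarrow> y \<union> z; dually for pullbacks.\<close>
definition partial_model :: "('a::order \<times> 'a) set \<Rightarrow> ('a \<times> 'a) set \<Rightarrow> ('a \<times> 'a) set \<Rightarrow> bool" where
  "partial_model W U V \<longleftrightarrow> homotopical W \<and> subcat U \<and> subcat V \<and> U \<subseteq> W \<and> V \<subseteq> W \<and>
     (\<forall>x y z. (x,y) \<in> U \<longrightarrow> x \<le> z \<longrightarrow> (\<exists>s. is_lub y z s \<and> (z,s) \<in> U)) \<and>
     (\<forall>x y z. (y,x) \<in> V \<longrightarrow> z \<le> x \<longrightarrow> (\<exists>p. is_glb y z p \<and> (p,z) \<in> V)) \<and>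
     (\<exists>m :: 'a \<Rightarrow> 'a \<Rightarrow> 'a.
        (\<forall>x y. (x,y) \<in> W \<longrightarrow> (x, m x y) \<in> U \<and> (m x y, y) \<in> V) \<and>
        (\<forall>x y x' y'. (x,y) \<in> W \<longrightarrow> (x',y') \<in> W \<longrightarrow> x \<le> x' \<longrightarrow> y \<le> y' \<longrightarrow> m x y \<le> m x' y'))"

definition component :: "('a \<times> 'a) set \<Rightarrow> 'a \<Rightarrow> 'a set" where
  "component W x = {y. (x,y) \<in> (W \<union> W\<inverse>)\<^sup>*}"

definition is_component :: "('a \<times> 'a) set \<Rightarrow> 'a set \<Rightarrow> bool" where
  "is_component W Q \<longleftrightarrow> (\<exists>x. Q = component W x)"

text \<open>Geometric realization of the nerve of the full subcategory of W on Q
  (the order complex: nondegenerate simplices are finite nonempty W-chains),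
  with the weak (coherent) topology.\<close>
definition wchain :: "('a \<times> 'a) set \<Rightarrow> 'a set \<Rightarrow> 'a set \<Rightarrow> bool" where
  "wchain W Q \<sigma> \<longleftrightarrow> finite \<sigma> \<and> \<sigma> \<noteq> {} \<and> \<sigma> \<subseteq> Q \<and>
     (\<forall>x\<in>\<sigma>. \<forall>y\<in>\<sigma>. (x,y) \<in> W \<or> (y,x) \<in> W)"

definition chain_simplex :: "'a set \<Rightarrow> ('a \<Rightarrow> real) set" where
  "chain_simplex \<sigma> = {\<phi>. (\<forall>z. 0 \<le> \<phi> z) \<and> (\<forall>z. z \<notin> \<sigma> \<longrightarrow> \<phi> z = 0) \<and> sum \<phi> \<sigma> = 1}"

definition realization_carrier :: "('a \<times> 'a) set \<Rightarrow> 'a set \<Rightarrow> ('a \<Rightarrow> real) set" where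
  "realization_carrier W Q = (\<Union>\<sigma>\<in>{\<sigma>. wchain W Q \<sigma>}. chain_simplex \<sigma>)"

definition nerve_realization :: "('a \<times> 'a) set \<Rightarrow> 'a set \<Rightarrow> ('a \<Rightarrow> real) topology" where
  "nerve_realization W Q = topology (\<lambda>S. S \<subseteq> realization_carrier W Q \<and>
     (\<forall>\<sigma>. wchain W Q \<sigma> \<longrightarrow>
        openin (subtopology (product_topology (\<lambda>_. euclideanreal) UNIV) (chain_simplex \<sigma>)) (S \<inter> chain_simplex \<sigma>)))"

end

theory Submission
  imports Defs
begin

text \<open>
  Let \<open>c\<close> be the middle object of a factorization \<open>a \<rightarrow> c \<rightarrow> b\<close> of the maximal map into
  \<open>U\<close> followed by \<open>V\<close>. Pushing out along \<open>a \<rightarrow> c\<close> never leaves the objects below \<open>b\<close>, and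
  pulling back along \<open>c \<rightarrow> b\<close> never leaves the objects above \<open>a\<close>; with 2-out-of-6 this makes
  "\<open>c \<times> y\<close> exists with \<open>c \<times> y \<rightarrow> y\<close> in \<open>V\<close>" equivalent to "\<open>c \<union> y\<close> exists with
  \<open>y \<rightarrow> c \<union> y\<close> in \<open>U\<close>". The first property is inherited along W-maps into \<open>y\<close>, the second
  along W-maps out of \<open>y\<close>, so both spread from \<open>c\<close> over the whole component.

  For contractibility, the W-natural maps \<open>id \<Leftarrow> c \<times> - \<Rightarrow> c\<close> induce homotopic maps on the
  realization. The homotopy between the maps induced by \<open>A \<Rightarrow> B\<close> moves, at time \<open>t\<close>, the
  weight of a vertex \<open>x\<close> of a simplex from \<open>B x\<close> to \<open>A x\<close> as far as it lies in the initial
  segment of length \<open>t\<close> of the cumulative weights along the chain; the resulting support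
  \<open>{A x | x \<le> x\<^sub>0} \<union> {B x | x \<ge> x\<^sub>0}\<close> is again a W-chain.
\<close>

section \<open>Partial model structures on a poset\<close>

lemma subcat_le: "subcat S \<Longrightarrow> (x,y) \<in> S \<Longrightarrow> x \<le> y"
  unfolding subcat_def by blast

lemma subcat_trans: "subcat S \<Longrightarrow> (x,y) \<in> S \<Longrightarrow> (y,z) \<in> S \<Longrightarrow> (x,z) \<in> S"
  unfolding subcat_def by blast

lemma subcat_refl_source: "subcat S \<Longrightarrow> (x,y) \<in> S \<Longrightarrow> (x,x) \<in> S"
  unfolding subcat_def by blast

lemma homotopical_subcat: "homotopical W \<Longrightarrow> subcat W"
  unfolding homotopical_def by blast

lemma homotopical_refl: "homotopical W \<Longrightarrow> (x,x) \<in> W"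
  unfolding homotopical_def by blast

lemma homotopical_left_cancel:
  assumes "homotopical W" "x \<le> y" "y \<le> z" "(x,y) \<in> W" "(x,z) \<in> W"
  shows "(y,z) \<in> W"
  using assms unfolding homotopical_def by (metis order_refl)

lemma homotopical_right_cancel:
  assumes "homotopical W" "x \<le> y" "y \<le> z" "(y,z) \<in> W" "(x,z) \<in> W"
  shows "(x,y) \<in> W"
  using assms unfolding homotopical_def by (metis order_refl)

lemma component_closed_target:
  "is_component W Q \<Longrightarrow> y \<in> Q \<Longrightarrow> (y,t) \<in> W \<Longrightarrow> t \<in> Q"
  unfolding is_component_def component_def by (blast intro: rtrancl_into_rtrancl)

lemma component_closed_source:
  "is_component W Q \<Longrightarrow> y \<in> Q \<Longrightarrow> (t,y) \<in> W \<Longrightarrow> t \<in> Q"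
  unfolding is_component_def component_def by (blast intro: rtrancl_into_rtrancl)

lemma component_connected:
  assumes "is_component W Q" "x \<in> Q" "y \<in> Q"
  shows "(x,y) \<in> (W \<union> W\<inverse>)\<^sup>*"
proof -
  obtain x0 where Q: "Q = component W x0" using assms(1) unfolding is_component_def by blast
  have "(x0,x) \<in> (W \<union> W\<inverse>)\<^sup>*" "(x0,y) \<in> (W \<union> W\<inverse>)\<^sup>*"
    using assms(2,3) unfolding Q component_def by auto
  moreover have "sym ((W \<union> W\<inverse>)\<^sup>*)" by (intro sym_rtrancl) (auto simp: sym_def)
  ultimately show ?thesis by (meson rtrancl_trans symD)
qed

locale partial_model_poset =
  fixes W U V :: "('a::order \<times> 'a) set"
  assumes homotopical: "homotopical W"
    and subcat_U: "subcat U" and subcat_V: "subcat V"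
    and U_W: "\<And>x y. (x,y) \<in> U \<Longrightarrow> (x,y) \<in> W"
    and V_W: "\<And>x y. (x,y) \<in> V \<Longrightarrow> (x,y) \<in> W"
    and pushout_U: "\<And>x y z. (x,y) \<in> U \<Longrightarrow> x \<le> z \<Longrightarrow> \<exists>s. is_lub y z s \<and> (z,s) \<in> U"
    and pullback_V: "\<And>x y z. (y,x) \<in> V \<Longrightarrow> z \<le> x \<Longrightarrow> \<exists>p. is_glb y z p \<and> (p,z) \<in> V"
    and factor_W: "\<And>x y. (x,y) \<in> W \<Longrightarrow> \<exists>k. (x,k) \<in> U \<and> (k,y) \<in> V"
begin

lemmas W_le = subcat_le[OF homotopical_subcat[OF homotopical]]
  and W_trans = subcat_trans[OF homotopical_subcat[OF homotopical]]
  and U_le = subcat_le[OF subcat_U] and U_trans = subcat_trans[OF subcat_U]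
  and V_le = subcat_le[OF subcat_V] and V_trans = subcat_trans[OF subcat_V]
  and W_left_cancel = homotopical_left_cancel[OF homotopical]
  and W_right_cancel = homotopical_right_cancel[OF homotopical]

definition V_meet :: "'a \<Rightarrow> 'a \<Rightarrow> bool" where
  "V_meet c y \<longleftrightarrow> (\<exists>p. is_glb c y p \<and> (p,y) \<in> V \<and> (p,c) \<in> W)"

definition U_join :: "'a \<Rightarrow> 'a \<Rightarrow> bool" where
  "U_join c y \<longleftrightarrow> (\<exists>s. is_lub c y s \<and> (y,s) \<in> U \<and> (c,s) \<in> W)"

lemma V_meet_self: "(c,c) \<in> V \<Longrightarrow> V_meet c c"
  unfolding V_meet_def is_glb_def using homotopical_refl[OF homotopical] by blast

lemma V_meet_downward:
  assumes "V_meet c y" "(z,y) \<in> W"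
  shows "V_meet c z"
proof -
  obtain p where p: "is_glb c y p" "(p,y) \<in> V" "(p,c) \<in> W"
    using assms(1) unfolding V_meet_def by blast
  have zy: "z \<le> y" using W_le[OF assms(2)] .
  obtain q where q: "is_glb p z q" "(q,z) \<in> V" using pullback_V[OF p(2) zy] by blast
  have glb: "is_glb c z q" using p(1) q(1) zy unfolding is_glb_def by (meson order_trans)
  have qp: "q \<le> p" and py: "p \<le> y" using q(1) p(1) unfolding is_glb_def by blast+
  have "(q,y) \<in> W" using W_trans[OF V_W[OF q(2)] assms(2)] .
  then have "(q,p) \<in> W" using W_right_cancel[OF qp py V_W[OF p(2)]] by simp
  then have "(q,c) \<in> W" using W_trans[OF _ p(3)] by simp
  then show ?thesis unfolding V_meet_def using glb q(2) by blast
qed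

lemma U_join_upward:
  assumes "U_join c y" "(y,z) \<in> W"
  shows "U_join c z"
proof -
  obtain s where s: "is_lub c y s" "(y,s) \<in> U" "(c,s) \<in> W"
    using assms(1) unfolding U_join_def by blast
  have yz: "y \<le> z" using W_le[OF assms(2)] .
  obtain t where t: "is_lub s z t" "(z,t) \<in> U" using pushout_U[OF s(2) yz] by blast
  have lub: "is_lub c z t" using s(1) t(1) yz unfolding is_lub_def by (meson order_trans)
  have ys: "y \<le> s" and st: "s \<le> t" using s(1) t(1) unfolding is_lub_def by blast+
  have "(y,t) \<in> W" using W_trans[OF assms(2) U_W[OF t(2)]] .
  then have "(s,t) \<in> W" using W_left_cancel[OF ys st U_W[OF s(2)]] by simp
  then have "(c,t) \<in> W" using W_trans[OF s(3)] by simp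
  then show ?thesis unfolding U_join_def using lub t(2) by blast
qed

end

lemma partial_model_poset_if_partial_model:
  assumes "partial_model W U V"
  shows "partial_model_poset W U V"
proof -
  from assms obtain m where
    W: "homotopical W" and U: "subcat U" and V: "subcat V" and UW: "U \<subseteq> W" and VW: "V \<subseteq> W"
    and push: "\<forall>x y z. (x,y) \<in> U \<longrightarrow> x \<le> z \<longrightarrow> (\<exists>s. is_lub y z s \<and> (z,s) \<in> U)"
    and pull: "\<forall>x y z. (y,x) \<in> V \<longrightarrow> z \<le> x \<longrightarrow> (\<exists>p. is_glb y z p \<and> (p,z) \<in> V)"
    and m: "\<forall>x y. (x,y) \<in> W \<longrightarrow> (x, m x y) \<in> U \<and> (m x y, y) \<in> V"
    unfolding partial_model_def by (elim conjE exE) (rule that)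
  show ?thesis
  proof
    show "\<exists>k. (x,k) \<in> U \<and> (k,y) \<in> V" if "(x,y) \<in> W" for x y
      using m that by blast
  qed (use W U V UW VW push pull in blast)+
qed

locale maximal_map_factorization = partial_model_poset +
  fixes Q :: "'a set" and a b c :: 'a
  assumes component: "is_component W Q"
    and a_in: "a \<in> Q" and b_in: "b \<in> Q"
    and a_minimal: "\<forall>z\<in>Q. (z,a) \<in> W \<longrightarrow> z = a"
    and b_maximal: "\<forall>z\<in>Q. (b,z) \<in> W \<longrightarrow> z = b"
    and a_c: "(a,c) \<in> U" and c_b: "(c,b) \<in> V"
begin

lemma c_in: "c \<in> Q"
  using component_closed_target[OF component a_in U_W[OF a_c]] .

lemma U_preserves_below_b:
  assumes "(u,v) \<in> U" "u \<le> b"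
  shows "v \<le> b"
proof -
  obtain s where s: "is_lub v b s" "(b,s) \<in> U" using pushout_U[OF assms] by blast
  have "s \<in> Q" using component_closed_target[OF component b_in U_W[OF s(2)]] .
  then have "s = b" using b_maximal U_W[OF s(2)] by blast
  then show ?thesis using s(1) unfolding is_lub_def by blast
qed

lemma V_preserves_above_a:
  assumes "(u,v) \<in> V" "a \<le> v"
  shows "a \<le> u"
proof -
  obtain p where p: "is_glb u a p" "(p,a) \<in> V" using pullback_V[OF assms] by blast
  have "p \<in> Q" using component_closed_source[OF component a_in V_W[OF p(2)]] .
  then have "p = a" using a_minimal V_W[OF p(2)] by blast
  then show ?thesis using p(1) unfolding is_glb_def by blast
qed

lemma V_meet_if_U_join:
  assumes "U_join c y"
  shows "V_meet c y"
proof -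
  obtain s where s: "is_lub c y s" "(y,s) \<in> U" "(c,s) \<in> W"
    using assms unfolding U_join_def by blast
  obtain k where k: "(c,k) \<in> U" "(k,s) \<in> V" using factor_W[OF s(3)] by blast
  have "y \<le> s" using s(1) unfolding is_lub_def by blast
  then obtain g where g: "is_glb k y g" "(g,y) \<in> V" using pullback_V[OF k(2)] by blast
  have "k \<le> b" using U_preserves_below_b[OF k(1) V_le[OF c_b]] .
  then have "g \<le> b" using g(1) unfolding is_glb_def by (blast intro: order_trans)
  then obtain p where p: "is_glb c g p" "(p,g) \<in> V" using pullback_V[OF c_b] by blast
  have glb: "is_glb c y p"
    using p(1) g(1) U_le[OF k(1)] unfolding is_glb_def by (meson order_trans)
  have py: "(p,y) \<in> V" using V_trans[OF p(2) g(2)] .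
  have "(p,s) \<in> W" using W_trans[OF V_W[OF py] U_W[OF s(2)]] .
  moreover have pc: "p \<le> c" and cs: "c \<le> s"
    using glb s(1) unfolding is_glb_def is_lub_def by blast+
  ultimately have "(p,c) \<in> W" using W_right_cancel[OF pc cs s(3)] by simp
  then show ?thesis unfolding V_meet_def using glb py by blast
qed

lemma U_join_if_V_meet:
  assumes "V_meet c y"
  shows "U_join c y"
proof -
  obtain p where p: "is_glb c y p" "(p,y) \<in> V" "(p,c) \<in> W"
    using assms unfolding V_meet_def by blast
  obtain k where k: "(p,k) \<in> U" "(k,c) \<in> V" using factor_W[OF p(3)] by blast
  have "p \<le> y" using p(1) unfolding is_glb_def by blast
  then obtain h where h: "is_lub k y h" "(y,h) \<in> U" using pushout_U[OF k(1)] by blast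
  have "a \<le> k" using V_preserves_above_a[OF k(2) U_le[OF a_c]] .
  then have "a \<le> h" using h(1) unfolding is_lub_def by (blast intro: order_trans)
  then obtain s where s: "is_lub c h s" "(h,s) \<in> U" using pushout_U[OF a_c] by blast
  have lub: "is_lub c y s"
    using s(1) h(1) V_le[OF k(2)] unfolding is_lub_def by (meson order_trans)
  have ys: "(y,s) \<in> U" using U_trans[OF h(2) s(2)] .
  have "(p,s) \<in> W" using W_trans[OF V_W[OF p(2)] U_W[OF ys]] .
  moreover have pc: "p \<le> c" and cs: "c \<le> s"
    using p(1) lub unfolding is_glb_def is_lub_def by blast+
  ultimately have "(c,s) \<in> W" using W_left_cancel[OF pc cs p(3)] by simp
  then show ?thesis unfolding U_join_def using lub ys by blast
qed

lemma V_meet_in_component: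
  assumes "y \<in> Q"
  shows "V_meet c y"
proof -
  have "(c,y) \<in> (W \<union> W\<inverse>)\<^sup>*" using component_connected[OF component c_in assms] .
  then show ?thesis
  proof (induction rule: rtrancl_induct)
    case base
    show ?case using V_meet_self subcat_refl_source[OF subcat_V c_b] by blast
  next
    case (step y z)
    show ?case
    proof (cases "(y,z) \<in> W")
      case True
      then show ?thesis
        using V_meet_if_U_join U_join_upward U_join_if_V_meet[OF step.IH] by blast
    next
      case False
      then show ?thesis using step V_meet_downward by blast
    qed
  qed
qed

lemma meet_in_component:
  assumes "x \<in> Q"
  shows "\<exists>p\<in>Q. is_glb c x p \<and> (p,x) \<in> W \<and> (p,c) \<in> W"
  using V_meet_in_component[OF assms] component_closed_source[OF component assms] V_W
  unfolding V_meet_def by blast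

lemma join_in_component:
  assumes "x \<in> Q"
  shows "\<exists>s\<in>Q. is_lub c x s"
  using U_join_if_V_meet[OF V_meet_in_component[OF assms]] component_closed_target[OF component assms] U_W
  unfolding U_join_def by blast

end

section \<open>The topology of the realization\<close>

abbreviation funspace :: "('a \<Rightarrow> real) topology" where
  "funspace \<equiv> product_topology (\<lambda>_. euclideanreal) UNIV"

abbreviation simplex_topology :: "'a set \<Rightarrow> ('a \<Rightarrow> real) topology" where
  "simplex_topology \<sigma> \<equiv> subtopology funspace (chain_simplex \<sigma>)"

abbreviation unit_interval :: "real topology" where
  "unit_interval \<equiv> top_of_set {0..1}"

lemma openin_nerve_realization:
  "openin (nerve_realization W Q) S \<longleftrightarrow> S \<subseteq> realization_carrier W Q \<and>
     (\<forall>\<sigma>. wchain W Q \<sigma> \<longrightarrow> openin (simplex_topology \<sigma>) (S \<inter> chain_simplex \<sigma>))"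
proof -
  define open_on_simplices where "open_on_simplices = (\<lambda>S. S \<subseteq> realization_carrier W Q \<and>
     (\<forall>\<sigma>. wchain W Q \<sigma> \<longrightarrow> openin (simplex_topology \<sigma>) (S \<inter> chain_simplex \<sigma>)))"
  have "istopology open_on_simplices"
    unfolding istopology_def
  proof (intro conjI allI impI)
    fix S T assume S: "open_on_simplices S" and T: "open_on_simplices T"
    show "open_on_simplices (S \<inter> T)"
      unfolding open_on_simplices_def
    proof (intro conjI allI impI)
      show "S \<inter> T \<subseteq> realization_carrier W Q" using S unfolding open_on_simplices_def by blast
      fix \<sigma> assume "wchain W Q \<sigma>"
      then have "openin (simplex_topology \<sigma>) (S \<inter> chain_simplex \<sigma>)"
        and "openin (simplex_topology \<sigma>) (T \<inter> chain_simplex \<sigma>)"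
        using S T unfolding open_on_simplices_def by blast+
      then have "openin (simplex_topology \<sigma>) ((S \<inter> chain_simplex \<sigma>) \<inter> (T \<inter> chain_simplex \<sigma>))"
        by (rule openin_Int)
      moreover have "(S \<inter> chain_simplex \<sigma>) \<inter> (T \<inter> chain_simplex \<sigma>) = S \<inter> T \<inter> chain_simplex \<sigma>"
        by blast
      ultimately show "openin (simplex_topology \<sigma>) (S \<inter> T \<inter> chain_simplex \<sigma>)" by simp
    qed
  next
    fix K assume K: "\<forall>S\<in>K. open_on_simplices S"
    show "open_on_simplices (\<Union>K)"
      unfolding open_on_simplices_def
    proof (intro conjI allI impI)
      show "\<Union>K \<subseteq> realization_carrier W Q" using K unfolding open_on_simplices_def by blast
      fix \<sigma> assume "wchain W Q \<sigma>"
      then have "\<forall>S\<in>K. openin (simplex_topology \<sigma>) (S \<inter> chain_simplex \<sigma>)"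
        using K unfolding open_on_simplices_def by blast
      then have "openin (simplex_topology \<sigma>) (\<Union>S\<in>K. S \<inter> chain_simplex \<sigma>)"
        by (intro openin_Union) auto
      moreover have "(\<Union>S\<in>K. S \<inter> chain_simplex \<sigma>) = \<Union>K \<inter> chain_simplex \<sigma>" by blast
      ultimately show "openin (simplex_topology \<sigma>) (\<Union>K \<inter> chain_simplex \<sigma>)" by simp
    qed
  qed
  then have "openin (nerve_realization W Q) = open_on_simplices"
    unfolding nerve_realization_def open_on_simplices_def by (rule topology_inverse')
  then show ?thesis unfolding open_on_simplices_def by simp
qed

lemma chain_simplex_subset_carrier:
  "wchain W Q \<sigma> \<Longrightarrow> chain_simplex \<sigma> \<subseteq> realization_carrier W Q"
  unfolding realization_carrier_def by blast

lemma topspace_funspace [simp]: "topspace funspace = UNIV"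
  by (simp add: topspace_product_topology)

lemma topspace_nerve_realization:
  "topspace (nerve_realization W Q) = realization_carrier W Q"
proof (rule antisym)
  have "openin (simplex_topology \<sigma>) (realization_carrier W Q \<inter> chain_simplex \<sigma>)"
    if "wchain W Q \<sigma>" for \<sigma>
    using openin_topspace[of "simplex_topology \<sigma>"] chain_simplex_subset_carrier[OF that]
    by (simp add: Int_absorb1)
  then have "openin (nerve_realization W Q) (realization_carrier W Q)"
    unfolding openin_nerve_realization by blast
  then show "realization_carrier W Q \<subseteq> topspace (nerve_realization W Q)"
    by (rule openin_subset)
  show "topspace (nerve_realization W Q) \<subseteq> realization_carrier W Q"
    using openin_topspace[of "nerve_realization W Q"] unfolding openin_nerve_realization
    by (rule conjunct1)
qed

definition simplex_sum :: "('a \<times> 'a) set \<Rightarrow> 'a set \<Rightarrow> ('a set \<times> ('a \<Rightarrow> real)) topology" where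
  "simplex_sum W Q = sum_topology simplex_topology {\<sigma>. wchain W Q \<sigma>}"

lemma quotient_map_simplex_sum: "quotient_map (simplex_sum W Q) (nerve_realization W Q) snd"
  unfolding quotient_map_def
proof (intro conjI allI impI)
  show "snd ` topspace (simplex_sum W Q) = topspace (nerve_realization W Q)"
    unfolding simplex_sum_def topspace_nerve_realization realization_carrier_def
    by (force simp: o_def)
  fix S assume S: "S \<subseteq> topspace (nerve_realization W Q)"
  have slice: "{x. (\<sigma>, x) \<in> {x \<in> topspace (simplex_sum W Q). snd x \<in> S}} = S \<inter> chain_simplex \<sigma>"
    if "wchain W Q \<sigma>" for \<sigma> using that unfolding simplex_sum_def by auto
  have "openin (simplex_sum W Q) {x \<in> topspace (simplex_sum W Q). snd x \<in> S} \<longleftrightarrow>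
     (\<forall>\<sigma>\<in>{\<sigma>. wchain W Q \<sigma>}. openin (simplex_topology \<sigma>)
        {x. (\<sigma>, x) \<in> {x \<in> topspace (simplex_sum W Q). snd x \<in> S}})"
    by (subst (1) simplex_sum_def, subst openin_sum_topology) (auto simp: simplex_sum_def)
  also have "\<dots> \<longleftrightarrow> openin (nerve_realization W Q) S"
    using slice S by (auto simp: openin_nerve_realization topspace_nerve_realization)
  finally show "openin (simplex_sum W Q) {x \<in> topspace (simplex_sum W Q). snd x \<in> S}
      = openin (nerve_realization W Q) S" .
qed

text \<open>The product with the (locally compact) unit interval preserves the quotient map, so
  openness in \<open>[0,1] \<times> |Q|\<close> can be tested simplexwise.\<close>
lemma openin_interval_times_nerve_realization:
  assumes G: "G \<subseteq> {0..1} \<times> realization_carrier W Q"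
    and simplexwise: "\<And>\<sigma>. wchain W Q \<sigma> \<Longrightarrow>
       openin (prod_topology unit_interval (simplex_topology \<sigma>)) {z \<in> G. snd z \<in> chain_simplex \<sigma>}"
  shows "openin (prod_topology unit_interval (nerve_realization W Q)) G"
proof -
  let ?Y = "prod_topology unit_interval (simplex_sum W Q)"
  let ?q = "\<lambda>(t,y). (t, snd y)"
  have "locally_compact_space unit_interval"
    by (simp add: compact_imp_locally_compact_space compact_space_subtopology)
  then have q: "quotient_map ?Y (prod_topology unit_interval (nerve_realization W Q)) ?q"
    by (rule quotient_map_prod_right)
       (simp_all add: Hausdorff_space_subtopology quotient_map_simplex_sum)
  have "openin ?Y {y \<in> topspace ?Y. ?q y \<in> G}"
    unfolding openin_prod_topology_alt
  proof (intro allI impI)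
    fix t y assume ty: "(t,y) \<in> {y \<in> topspace ?Y. ?q y \<in> G}"
    obtain \<sigma> \<phi> where y: "y = (\<sigma>,\<phi>)" by fastforce
    have t: "t \<in> topspace unit_interval" and "y \<in> topspace (simplex_sum W Q)" and "(t,\<phi>) \<in> G"
      using ty unfolding y by auto
    then have \<sigma>: "wchain W Q \<sigma>" and "(t,\<phi>) \<in> {z \<in> G. snd z \<in> chain_simplex \<sigma>}"
      unfolding y simplex_sum_def by auto
    then obtain T S where TS: "openin unit_interval T" "openin (simplex_topology \<sigma>) S"
        "t \<in> T" "\<phi> \<in> S" "T \<times> S \<subseteq> {z \<in> G. snd z \<in> chain_simplex \<sigma>}"
      using simplexwise[OF \<sigma>] unfolding openin_prod_topology_alt by meson
    have S_sub: "S \<subseteq> chain_simplex \<sigma>" using openin_subset[OF TS(2)] by simp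
    have T_sub: "T \<subseteq> {0..1}" using openin_subset[OF TS(1)] by simp
    have "openin (simplex_topology \<tau>) {x. (\<tau>, x) \<in> {\<sigma>} \<times> S}" for \<tau>
      using TS(2) by (cases "\<tau> = \<sigma>") auto
    then have "openin (simplex_sum W Q) ({\<sigma>} \<times> S)"
      unfolding simplex_sum_def openin_sum_topology using \<sigma> S_sub by auto
    moreover have "T \<times> ({\<sigma>} \<times> S) \<subseteq> {y \<in> topspace ?Y. ?q y \<in> G}"
    proof
      fix z assume "z \<in> T \<times> ({\<sigma>} \<times> S)"
      then obtain t' \<phi>' where z: "z = (t', \<sigma>, \<phi>')" and "t' \<in> T" "\<phi>' \<in> S" by blast
      then show "z \<in> {y \<in> topspace ?Y. ?q y \<in> G}"
        using TS(5) T_sub S_sub \<sigma> unfolding simplex_sum_def by auto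
    qed
    ultimately show "\<exists>T S. openin unit_interval T \<and> openin (simplex_sum W Q) S \<and> t \<in> T \<and> y \<in> S
        \<and> T \<times> S \<subseteq> {y \<in> topspace ?Y. ?q y \<in> G}"
      using TS(1,3,4) y by blast
  qed
  moreover have "G \<subseteq> topspace (prod_topology unit_interval (nerve_realization W Q))"
    using G by (simp add: topspace_nerve_realization)
  ultimately show ?thesis using q unfolding quotient_map_def by blast
qed

lemma closedin_chain_simplex:
  assumes "finite \<tau>"
  shows "closedin funspace (chain_simplex \<tau>)"
proof -
  have eq: "chain_simplex \<tau> =
      (\<Inter>z. {\<phi> \<in> topspace funspace. \<phi> z \<in> (if z \<in> \<tau> then {0..} else {0})})
      \<inter> {\<phi> \<in> topspace funspace. sum \<phi> \<tau> \<in> {1}}"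
    unfolding chain_simplex_def by (auto split: if_splits) (metis order_refl)
  have evaluation: "continuous_map funspace euclideanreal (\<lambda>\<phi>. \<phi> z)" for z
    by (rule continuous_map_product_projection) simp
  have "closedin funspace {\<phi> \<in> topspace funspace. \<phi> z \<in> (if z \<in> \<tau> then {0..} else {0})}" for z
    by (rule closedin_continuous_map_preimage[OF evaluation]) (simp add: closed_closedin[symmetric])
  moreover have "closedin funspace {\<phi> \<in> topspace funspace. sum \<phi> \<tau> \<in> {1}}"
    by (rule closedin_continuous_map_preimage)
       (auto intro: continuous_map_sum assms evaluation simp: closed_closedin[symmetric])
  ultimately show ?thesis unfolding eq by (intro closedin_Int closedin_INT) auto
qed

lemma continuous_map_evaluation:
  "continuous_map (prod_topology unit_interval (subtopology funspace S)) euclideanreal (\<lambda>p. snd p x)"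
proof -
  have "continuous_map (subtopology funspace S) euclideanreal (\<lambda>\<phi>. \<phi> x)"
    by (rule continuous_map_from_subtopology[OF continuous_map_product_projection]) simp
  then show ?thesis using continuous_map_compose[OF continuous_map_snd] by (fastforce simp: o_def)
qed

lemma continuous_map_time: "continuous_map (prod_topology unit_interval Y) euclideanreal fst"
  using continuous_map_fst[of unit_interval Y] by (rule continuous_map_into_fulltopology)

section \<open>Transferring weight along a natural transformation\<close>

definition pushforward :: "('a \<Rightarrow> 'b) \<Rightarrow> ('a \<Rightarrow> real) \<Rightarrow> 'b \<Rightarrow> real" where
  "pushforward f \<phi> = (\<lambda>z. \<Sum>x\<in>{x. \<phi> x \<noteq> 0 \<and> f x = z}. \<phi> x)"

definition weight_below :: "('a::order \<Rightarrow> real) \<Rightarrow> 'a \<Rightarrow> real" where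
  "weight_below \<phi> x = (\<Sum>y\<in>{y. \<phi> y \<noteq> 0 \<and> y < x}. \<phi> y)"

text \<open>The part of the weight of \<open>x\<close> lying in \<open>[0,t]\<close>, when the vertices are stacked as
  consecutive intervals in increasing order.\<close>
definition moved_weight :: "real \<Rightarrow> ('a::order \<Rightarrow> real) \<Rightarrow> 'a \<Rightarrow> real" where
  "moved_weight t \<phi> x = max 0 (min (\<phi> x) (t - weight_below \<phi> x))"

definition weight_transfer ::
    "('a::order \<Rightarrow> 'b) \<Rightarrow> ('a \<Rightarrow> 'b) \<Rightarrow> real \<Rightarrow> ('a \<Rightarrow> real) \<Rightarrow> 'b \<Rightarrow> real" where
  "weight_transfer A B t \<phi> = (\<lambda>z. (\<Sum>x\<in>{x. \<phi> x \<noteq> 0 \<and> A x = z}. moved_weight t \<phi> x)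
      + (\<Sum>x\<in>{x. \<phi> x \<noteq> 0 \<and> B x = z}. \<phi> x - moved_weight t \<phi> x))"

lemma pushforward_id: "pushforward id = id"
proof (intro ext)
  fix \<phi> :: "'a \<Rightarrow> real" and z
  have "{x. \<phi> x \<noteq> 0 \<and> id x = z} = (if \<phi> z = 0 then {} else {z})" by auto
  then show "pushforward id \<phi> z = id \<phi> z" unfolding pushforward_def by simp
qed

lemma moved_weight_nonneg: "0 \<le> moved_weight t \<phi> x"
  unfolding moved_weight_def by simp

lemma moved_weight_le: "0 \<le> \<phi> x \<Longrightarrow> moved_weight t \<phi> x \<le> \<phi> x"
  unfolding moved_weight_def by simp

lemma sum_over_support:
  assumes "finite \<sigma>" "\<And>x. x \<notin> \<sigma> \<Longrightarrow> \<phi> x = 0" "\<And>x. \<phi> x = 0 \<Longrightarrow> g x = 0"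
  shows "(\<Sum>x\<in>{x. \<phi> x \<noteq> 0 \<and> P x}. g x) = (\<Sum>x\<in>{x\<in>\<sigma>. P x}. g x)"
  by (rule sum.mono_neutral_left) (use assms in auto)

context
  fixes \<sigma> :: "'a::order set" and \<phi> :: "'a \<Rightarrow> real"
  assumes finite: "finite \<sigma>" and \<phi>: "\<phi> \<in> chain_simplex \<sigma>"
begin

lemma weight_nonneg: "0 \<le> \<phi> z" and weight_outside: "z \<notin> \<sigma> \<Longrightarrow> \<phi> z = 0"
  and weight_sum: "sum \<phi> \<sigma> = 1"
  using \<phi> unfolding chain_simplex_def by blast+

lemma sum_over_simplex:
  "(\<Sum>x\<in>{x. \<phi> x \<noteq> 0 \<and> P x}. \<phi> x) = (\<Sum>x\<in>{x\<in>\<sigma>. P x}. \<phi> x)"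
  by (rule sum_over_support[OF finite]) (use weight_outside in auto)

lemma weight_below_simplex: "weight_below \<phi> x = (\<Sum>y\<in>{y\<in>\<sigma>. y < x}. \<phi> y)"
  unfolding weight_below_def by (rule sum_over_simplex)

lemma weight_below_nonneg: "0 \<le> weight_below \<phi> x"
  unfolding weight_below_simplex by (simp add: sum_nonneg weight_nonneg)

lemma weight_transfer_simplex:
  "weight_transfer A B t \<phi> z = (\<Sum>x\<in>{x\<in>\<sigma>. A x = z}. moved_weight t \<phi> x)
     + (\<Sum>x\<in>{x\<in>\<sigma>. B x = z}. \<phi> x - moved_weight t \<phi> x)"
  unfolding weight_transfer_def
  by (intro arg_cong2[where f = "(+)"] sum_over_support[OF finite])
     (auto simp: weight_outside moved_weight_def)

lemma weight_below_step:
  assumes "y \<in> \<sigma>" "y < x"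
  shows "weight_below \<phi> y + \<phi> y \<le> weight_below \<phi> x"
proof -
  have "weight_below \<phi> y + \<phi> y = (\<Sum>z\<in>insert y {z\<in>\<sigma>. z < y}. \<phi> z)"
    unfolding weight_below_simplex using finite by (subst sum.insert) auto
  also have "\<dots> \<le> (\<Sum>z\<in>{z\<in>\<sigma>. z < x}. \<phi> z)"
    by (rule sum_mono2) (use finite assms weight_nonneg in \<open>auto intro: less_trans\<close>)
  finally show ?thesis unfolding weight_below_simplex .
qed

lemma weight_below_top: "x \<in> \<sigma> \<Longrightarrow> weight_below \<phi> x + \<phi> x \<le> 1"
proof -
  assume x: "x \<in> \<sigma>"
  have "weight_below \<phi> x + \<phi> x = (\<Sum>y\<in>insert x {y\<in>\<sigma>. y < x}. \<phi> y)"
    unfolding weight_below_simplex using finite by (subst sum.insert) auto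
  also have "\<dots> \<le> sum \<phi> \<sigma>"
    by (rule sum_mono2) (use finite x weight_nonneg in auto)
  finally show ?thesis using weight_sum by simp
qed

lemma moved_weight_0: "moved_weight 0 \<phi> x = 0"
  unfolding moved_weight_def using weight_below_nonneg[of x] weight_nonneg[of x] by simp

lemma moved_weight_1: "moved_weight 1 \<phi> x = \<phi> x"
  using weight_below_top[of x] weight_nonneg[of x] weight_outside[of x]
  unfolding moved_weight_def by (cases "x \<in> \<sigma>") auto

lemma weight_transfer_0: "weight_transfer A B 0 \<phi> = pushforward B \<phi>"
  unfolding weight_transfer_def pushforward_def moved_weight_0 by simp

lemma weight_transfer_1: "weight_transfer A B 1 \<phi> = pushforward A \<phi>"
  unfolding weight_transfer_def pushforward_def moved_weight_1 by simp

lemma pushforward_const: "pushforward (\<lambda>_. c) \<phi> = (\<lambda>z. if z = c then 1 else 0)"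
  using sum_over_simplex[of "\<lambda>_. True"] weight_sum
  by (auto simp: pushforward_def)

lemma weight_transfer_nonneg: "0 \<le> weight_transfer A B t \<phi> z"
  unfolding weight_transfer_simplex
  using moved_weight_nonneg moved_weight_le[of \<phi>, OF weight_nonneg]
  by (intro add_nonneg_nonneg sum_nonneg) auto

lemma weight_transfer_sum:
  assumes "finite Z" "A ` \<sigma> \<subseteq> Z" "B ` \<sigma> \<subseteq> Z"
  shows "(\<Sum>z\<in>Z. weight_transfer A B t \<phi> z) = 1"
proof -
  have "(\<Sum>z\<in>Z. weight_transfer A B t \<phi> z)
      = (\<Sum>z\<in>Z. \<Sum>x\<in>{x\<in>\<sigma>. A x = z}. moved_weight t \<phi> x)
        + (\<Sum>z\<in>Z. \<Sum>x\<in>{x\<in>\<sigma>. B x = z}. \<phi> x - moved_weight t \<phi> x)"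
    unfolding weight_transfer_simplex by (simp add: sum.distrib)
  also have "\<dots> = (\<Sum>x\<in>\<sigma>. moved_weight t \<phi> x) + (\<Sum>x\<in>\<sigma>. \<phi> x - moved_weight t \<phi> x)"
    using sum.group[OF finite assms(1,2), of "moved_weight t \<phi>"]
      sum.group[OF finite assms(1,3), of "\<lambda>x. \<phi> x - moved_weight t \<phi> x"]
    by simp
  also have "\<dots> = 1" using weight_sum by (simp add: sum_subtractf)
  finally show ?thesis .
qed

end

lemma continuous_map_weight_transfer:
  assumes "finite \<sigma>"
  shows "continuous_map (prod_topology unit_interval (simplex_topology \<sigma>)) funspace
           (\<lambda>p. weight_transfer A B (fst p) (snd p))"
  unfolding continuous_map_componentwise_UNIV
proof
  fix z
  let ?mv = "\<lambda>p x. max 0 (min (snd p x) (fst p - (\<Sum>y\<in>{y\<in>\<sigma>. y < x}. snd p y)))"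
  let ?f = "\<lambda>p. (\<Sum>x\<in>{x\<in>\<sigma>. A x = z}. ?mv p x) + (\<Sum>x\<in>{x\<in>\<sigma>. B x = z}. snd p x - ?mv p x)"
  have "continuous_map (prod_topology unit_interval (simplex_topology \<sigma>)) euclideanreal ?f"
    by (intro continuous_intros continuous_map_evaluation continuous_map_time)
       (auto simp: assms)
  then show "continuous_map (prod_topology unit_interval (simplex_topology \<sigma>)) euclideanreal
      (\<lambda>p. weight_transfer A B (fst p) (snd p) z)"
    by (rule continuous_map_eq)
       (auto simp: weight_transfer_simplex[OF assms] weight_below_simplex[OF assms] moved_weight_def)
qed

locale W_transformation =
  fixes W :: "('a::order \<times> 'a) set" and Q :: "'a set" and A B :: "'a \<Rightarrow> 'a"
  assumes subcat: "subcat W"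
    and A_in: "\<And>x. x \<in> Q \<Longrightarrow> A x \<in> Q" and B_in: "\<And>x. x \<in> Q \<Longrightarrow> B x \<in> Q"
    and transformation_W: "\<And>x. x \<in> Q \<Longrightarrow> (A x, B x) \<in> W"
    and A_map: "\<And>x y. x \<in> Q \<Longrightarrow> y \<in> Q \<Longrightarrow> (x,y) \<in> W \<Longrightarrow> (A x, A y) \<in> W"
    and B_map: "\<And>x y. x \<in> Q \<Longrightarrow> y \<in> Q \<Longrightarrow> (x,y) \<in> W \<Longrightarrow> (B x, B y) \<in> W"
begin

definition image_simplices :: "'a set \<Rightarrow> ('a \<Rightarrow> real) set" where
  "image_simplices \<sigma> = \<Union>(chain_simplex ` {\<tau>. \<tau> \<subseteq> A ` \<sigma> \<union> B ` \<sigma> \<and> wchain W Q \<tau>})"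

context
  fixes \<sigma> :: "'a set" and \<phi> :: "'a \<Rightarrow> real" and t :: real
  assumes \<sigma>: "wchain W Q \<sigma>" and \<phi>: "\<phi> \<in> chain_simplex \<sigma>"
begin

lemma finite_simplex: "finite \<sigma>" and simplex_in: "\<sigma> \<subseteq> Q"
  and simplex_chain: "x \<in> \<sigma> \<Longrightarrow> y \<in> \<sigma> \<Longrightarrow> (x,y) \<in> W \<or> (y,x) \<in> W"
  using \<sigma> unfolding wchain_def by blast+

lemma weight_transfer_source:
  assumes "weight_transfer A B t \<phi> z \<noteq> 0"
  shows "\<exists>x\<in>\<sigma>. (A x = z \<and> moved_weight t \<phi> x \<noteq> 0) \<or> (B x = z \<and> \<phi> x - moved_weight t \<phi> x \<noteq> 0)"
proof (rule ccontr)
  assume "\<not> ?thesis"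
  then have "(\<Sum>x\<in>{x\<in>\<sigma>. A x = z}. moved_weight t \<phi> x) = 0"
    and "(\<Sum>x\<in>{x\<in>\<sigma>. B x = z}. \<phi> x - moved_weight t \<phi> x) = 0"
    by (auto intro: sum.neutral)
  then have "weight_transfer A B t \<phi> z = 0"
    unfolding weight_transfer_simplex[OF finite_simplex \<phi>] by simp
  with assms show False by contradiction
qed

text \<open>Once \<open>x\<^sub>1\<close> has moved some weight, every earlier vertex has moved all of it.\<close>
lemma W_from_moved_to_kept:
  assumes x1: "x1 \<in> \<sigma>" and x2: "x2 \<in> \<sigma>"
    and "moved_weight t \<phi> x1 \<noteq> 0" and "\<phi> x2 - moved_weight t \<phi> x2 \<noteq> 0"
  shows "(A x1, B x2) \<in> W"
proof (cases "(x1,x2) \<in> W")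
  case True
  have "x1 \<in> Q" "x2 \<in> Q" using x1 x2 simplex_in by auto
  then show ?thesis using subcat_trans[OF subcat A_map[OF _ _ True] transformation_W] by blast
next
  case False
  then have "(x2,x1) \<in> W" "x2 \<noteq> x1" using simplex_chain[OF x1 x2] by auto
  then have "x2 < x1" using subcat_le[OF subcat] by force
  then have "weight_below \<phi> x2 + \<phi> x2 \<le> weight_below \<phi> x1"
    by (rule weight_below_step[OF finite_simplex \<phi> x2])
  moreover have "0 < t - weight_below \<phi> x1"
    using assms(3) moved_weight_nonneg[of t \<phi> x1] unfolding moved_weight_def by linarith
  ultimately have "moved_weight t \<phi> x2 = \<phi> x2"
    unfolding moved_weight_def using weight_nonneg[OF finite_simplex \<phi>, of x2] by simp
  then show ?thesis using assms(4) by simp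
qed

definition image_chain :: "'a set" where
  "image_chain = {z \<in> A ` \<sigma> \<union> B ` \<sigma>. weight_transfer A B t \<phi> z \<noteq> 0}"

lemma image_chain_sum: "sum (weight_transfer A B t \<phi>) image_chain = 1"
proof -
  have "sum (weight_transfer A B t \<phi>) image_chain = sum (weight_transfer A B t \<phi>) (A ` \<sigma> \<union> B ` \<sigma>)"
    by (rule sum.mono_neutral_left) (use finite_simplex in \<open>auto simp: image_chain_def\<close>)
  also have "\<dots> = 1" by (rule weight_transfer_sum[OF finite_simplex \<phi>]) (use finite_simplex in auto)
  finally show ?thesis .
qed

lemma weight_transfer_in_image_chain: "weight_transfer A B t \<phi> \<in> chain_simplex image_chain"
  unfolding chain_simplex_def
proof (intro CollectI conjI allI impI)
  show "0 \<le> weight_transfer A B t \<phi> z" for z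
    by (rule weight_transfer_nonneg[OF finite_simplex \<phi>])
  show "weight_transfer A B t \<phi> z = 0" if "z \<notin> image_chain" for z
    using that weight_transfer_source unfolding image_chain_def by blast
  show "sum (weight_transfer A B t \<phi>) image_chain = 1" by (rule image_chain_sum)
qed

lemma wchain_image_chain: "wchain W Q image_chain"
  unfolding wchain_def
proof (intro conjI ballI)
  show "finite image_chain" unfolding image_chain_def using finite_simplex by simp
  show "image_chain \<noteq> {}" using image_chain_sum by auto
  show "image_chain \<subseteq> Q" unfolding image_chain_def using simplex_in A_in B_in by blast
  fix z1 z2 assume z: "z1 \<in> image_chain" "z2 \<in> image_chain"
  obtain x1 where x1: "x1 \<in> \<sigma>"
    "(A x1 = z1 \<and> moved_weight t \<phi> x1 \<noteq> 0) \<or> (B x1 = z1 \<and> \<phi> x1 - moved_weight t \<phi> x1 \<noteq> 0)"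
    using weight_transfer_source z(1) unfolding image_chain_def by blast
  obtain x2 where x2: "x2 \<in> \<sigma>"
    "(A x2 = z2 \<and> moved_weight t \<phi> x2 \<noteq> 0) \<or> (B x2 = z2 \<and> \<phi> x2 - moved_weight t \<phi> x2 \<noteq> 0)"
    using weight_transfer_source z(2) unfolding image_chain_def by blast
  have Q: "x1 \<in> Q" "x2 \<in> Q" using x1(1) x2(1) simplex_in by auto
  show "(z1, z2) \<in> W \<or> (z2, z1) \<in> W"
    using x1(2) x2(2)
  proof (elim disjE conjE)
    assume "A x1 = z1" "A x2 = z2"
    then show ?thesis using simplex_chain[OF x1(1) x2(1)] A_map[OF Q] A_map[OF Q(2,1)] by blast
  next
    assume "B x1 = z1" "B x2 = z2"
    then show ?thesis using simplex_chain[OF x1(1) x2(1)] B_map[OF Q] B_map[OF Q(2,1)] by blast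
  next
    assume "A x1 = z1" "moved_weight t \<phi> x1 \<noteq> 0" "B x2 = z2" "\<phi> x2 - moved_weight t \<phi> x2 \<noteq> 0"
    then show ?thesis using W_from_moved_to_kept[OF x1(1) x2(1)] by blast
  next
    assume "B x1 = z1" "\<phi> x1 - moved_weight t \<phi> x1 \<noteq> 0" "A x2 = z2" "moved_weight t \<phi> x2 \<noteq> 0"
    then show ?thesis using W_from_moved_to_kept[OF x2(1) x1(1)] by blast
  qed
qed

lemma weight_transfer_in_image_simplices: "weight_transfer A B t \<phi> \<in> image_simplices \<sigma>"
proof -
  have "image_chain \<subseteq> A ` \<sigma> \<union> B ` \<sigma>" unfolding image_chain_def by blast
  then show ?thesis
    unfolding image_simplices_def using wchain_image_chain weight_transfer_in_image_chain by blast
qed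

end

lemma image_simplices_subset_carrier: "image_simplices \<sigma> \<subseteq> realization_carrier W Q"
  unfolding image_simplices_def realization_carrier_def by blast

text \<open>Only finitely many simplices meet the image of a simplex, and each of them is closed, so
  openness relative to their union reduces to openness in each of them.\<close>
lemma openin_image_simplices:
  assumes \<sigma>: "wchain W Q \<sigma>" and S: "openin (nerve_realization W Q) S"
  shows "openin (subtopology funspace (image_simplices \<sigma>)) (S \<inter> image_simplices \<sigma>)"
proof -
  define F where "F = {\<tau>. \<tau> \<subseteq> A ` \<sigma> \<union> B ` \<sigma> \<and> wchain W Q \<tau>}"
  have "finite \<sigma>" using \<sigma> unfolding wchain_def by blast
  have "finite F" unfolding F_def
    by (rule finite_subset[of _ "Pow (A ` \<sigma> \<union> B ` \<sigma>)"]) (use \<open>finite \<sigma>\<close> in auto)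
  have closed: "closedin funspace (chain_simplex \<tau> - S)" if "\<tau> \<in> F" for \<tau>
  proof -
    have \<tau>: "wchain W Q \<tau>" using that unfolding F_def by blast
    then have "openin (simplex_topology \<tau>) (S \<inter> chain_simplex \<tau>)"
      using S unfolding openin_nerve_realization by blast
    then have "closedin (simplex_topology \<tau>) (topspace (simplex_topology \<tau>) - S \<inter> chain_simplex \<tau>)"
      by (rule closedin_diff[OF closedin_topspace])
    moreover have "topspace (simplex_topology \<tau>) - S \<inter> chain_simplex \<tau> = chain_simplex \<tau> - S"
      by auto
    ultimately have "closedin (simplex_topology \<tau>) (chain_simplex \<tau> - S)" by simp
    then obtain T where T: "closedin funspace T" "chain_simplex \<tau> - S = T \<inter> chain_simplex \<tau>"
      unfolding closedin_subtopology by blast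
    have "finite \<tau>" using \<tau> unfolding wchain_def by blast
    then show ?thesis unfolding T(2) by (rule closedin_Int[OF T(1) closedin_chain_simplex])
  qed
  define C where "C = (\<Union>\<tau>\<in>F. chain_simplex \<tau> - S)"
  have "closedin funspace C" unfolding C_def using \<open>finite F\<close> closed by (intro closedin_Union) auto
  moreover have "S \<inter> image_simplices \<sigma> = (topspace funspace - C) \<inter> image_simplices \<sigma>"
    unfolding C_def image_simplices_def F_def by auto
  ultimately show ?thesis
    unfolding openin_subtopology using openin_diff[OF openin_topspace] by metis
qed

lemma continuous_map_weight_transfer_nerve_realization:
  "continuous_map (prod_topology unit_interval (nerve_realization W Q)) (nerve_realization W Q)
     (\<lambda>p. weight_transfer A B (fst p) (snd p))"
  unfolding continuous_map
proof (intro conjI allI impI)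
  let ?X = "nerve_realization W Q"
  let ?h = "\<lambda>p. weight_transfer A B (fst p) (snd p)"
  show "?h ` topspace (prod_topology unit_interval ?X) \<subseteq> topspace ?X"
    using weight_transfer_in_image_simplices image_simplices_subset_carrier
    by (fastforce simp: topspace_nerve_realization realization_carrier_def)
  fix S assume S: "openin ?X S"
  show "openin (prod_topology unit_interval ?X) {p \<in> topspace (prod_topology unit_interval ?X). ?h p \<in> S}"
  proof (rule openin_interval_times_nerve_realization)
    show "{p \<in> topspace (prod_topology unit_interval ?X). ?h p \<in> S} \<subseteq> {0..1} \<times> realization_carrier W Q"
      by (auto simp: topspace_nerve_realization)
    fix \<sigma> assume \<sigma>: "wchain W Q \<sigma>"
    have "continuous_map (prod_topology unit_interval (simplex_topology \<sigma>))
        (subtopology funspace (image_simplices \<sigma>)) ?h"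
      unfolding continuous_map_in_subtopology
      using continuous_map_weight_transfer \<sigma> weight_transfer_in_image_simplices[OF \<sigma>]
      by (auto simp: wchain_def)
    then have "openin (prod_topology unit_interval (simplex_topology \<sigma>))
        {p \<in> topspace (prod_topology unit_interval (simplex_topology \<sigma>)). ?h p \<in> S \<inter> image_simplices \<sigma>}"
      using openin_continuous_map_preimage openin_image_simplices[OF \<sigma> S] by blast
    moreover have "{p \<in> topspace (prod_topology unit_interval (simplex_topology \<sigma>)). ?h p \<in> S \<inter> image_simplices \<sigma>}
        = {p \<in> {p \<in> topspace (prod_topology unit_interval ?X). ?h p \<in> S}. snd p \<in> chain_simplex \<sigma>}"
      using weight_transfer_in_image_simplices[OF \<sigma>] chain_simplex_subset_carrier[OF \<sigma>]
      by (auto simp: topspace_nerve_realization)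
    ultimately show "openin (prod_topology unit_interval (simplex_topology \<sigma>))
        {p \<in> {p \<in> topspace (prod_topology unit_interval ?X). ?h p \<in> S}. snd p \<in> chain_simplex \<sigma>}"
      by simp
  qed
qed

lemma homotopic_pushforward:
  "homotopic_with (\<lambda>_. True) (nerve_realization W Q) (nerve_realization W Q)
     (pushforward B) (pushforward A)"
proof (rule homotopic_with_eq)
  show "homotopic_with (\<lambda>_. True) (nerve_realization W Q) (nerve_realization W Q)
      (weight_transfer A B 0) (weight_transfer A B 1)"
    unfolding homotopic_with_def
    using continuous_map_weight_transfer_nerve_realization by fastforce
qed (auto simp: topspace_nerve_realization realization_carrier_def wchain_def
    weight_transfer_0 weight_transfer_1)

end

section \<open>Contractibility\<close>

lemma contractible_nerve_realization_if_meets: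
  assumes W: "homotopical W" and c: "c \<in> Q"
    and meet: "\<And>x. x \<in> Q \<Longrightarrow> \<exists>p\<in>Q. is_glb c x p \<and> (p,x) \<in> W \<and> (p,c) \<in> W"
  shows "contractible_space (nerve_realization W Q)"
proof -
  let ?X = "nerve_realization W Q"
  obtain F where F: "\<And>x. x \<in> Q \<Longrightarrow> F x \<in> Q \<and> is_glb c x (F x) \<and> (F x, x) \<in> W \<and> (F x, c) \<in> W"
    using meet by metis
  have F_map: "(F x, F y) \<in> W" if "x \<in> Q" "y \<in> Q" "(x,y) \<in> W" for x y
  proof -
    have le: "F x \<le> F y" "F y \<le> y"
      using F[OF that(1)] F[OF that(2)] subcat_le[OF homotopical_subcat[OF W] that(3)]
      unfolding is_glb_def by (meson order_trans)+
    have "(F x, y) \<in> W"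
      using subcat_trans[OF homotopical_subcat[OF W]] F[OF that(1)] that(3) by blast
    then show ?thesis using homotopical_right_cancel[OF W le] F[OF that(2)] by simp
  qed
  interpret to_id: W_transformation W Q F id
    by unfold_locales (use homotopical_subcat[OF W] F F_map in auto)
  interpret to_c: W_transformation W Q F "\<lambda>_. c"
    by unfold_locales (use homotopical_subcat[OF W] homotopical_refl[OF W] F F_map c in auto)
  have "homotopic_with (\<lambda>_. True) ?X ?X id (pushforward F)"
    using to_id.homotopic_pushforward by (simp only: pushforward_id)
  moreover have "homotopic_with (\<lambda>_. True) ?X ?X (pushforward F) (\<lambda>_. \<lambda>z. if z = c then 1 else 0)"
    by (rule homotopic_with_eq[OF homotopic_with_symD[OF to_c.homotopic_pushforward]])
       (auto simp: topspace_nerve_realization realization_carrier_def wchain_def pushforward_const)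
  ultimately show ?thesis unfolding contractible_space_def by (blast intro: homotopic_with_trans)
qed

theorem proposition7p8:
  fixes W U V :: "('a::order \<times> 'a) set" and Q :: "'a set" and a b :: 'a
  assumes "partial_model W U V"
    and "is_component W Q"
    and "a \<in> Q" and "b \<in> Q" and "(a,b) \<in> W"
    and "\<forall>z\<in>Q. (z,a) \<in> W \<longrightarrow> z = a"
    and "\<forall>z\<in>Q. (b,z) \<in> W \<longrightarrow> z = b"
  shows "(\<exists>c\<in>Q. \<forall>x\<in>Q. (\<exists>p. is_glb c x p \<and> p \<in> Q) \<and> (\<exists>s. is_lub c x s \<and> s \<in> Q))
         \<and> contractible_space (nerve_realization W Q)"
proof -
  interpret partial_model_poset W U V
    using partial_model_poset_if_partial_model[OF assms(1)] .
  obtain c where "(a,c) \<in> U" "(c,b) \<in> V" using factor_W[OF assms(5)] by blast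
  then interpret maximal_map_factorization W U V Q a b c
    using assms by unfold_locales
  have "\<forall>x\<in>Q. (\<exists>p. is_glb c x p \<and> p \<in> Q) \<and> (\<exists>s. is_lub c x s \<and> s \<in> Q)"
    using meet_in_component join_in_component by blast
  moreover have "contractible_space (nerve_realization W Q)"
    using contractible_nerve_realization_if_meets[OF homotopical c_in meet_in_component] .
  ultimately show ?thesis using c_in by blast
qed

end
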